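(* Let $\gamma\subset\mathbb{R}^D$ be an irreducible real algebraic curve of constant degree, let $\alpha(t)=(t,\alpha_2(t),\ldots,\alpha_D(t))$, $t\in(0,1)$, be a real-analytic parametrization of a relatively open connected arc of $\gamma$, let $\rho(x,y)=(x-y)^2+\sum_{i=2}^D(\alpha_i(x)-\alpha_i(y))^2$, and let $T:(0,1)^4\to\mathbb{R}^4$, $T(x,x',y,y')=(\rho(x,y),\rho(x,y'),\rho(x',y),\rho(x',y'))$, with Jacobian matrix $J_T$. If $\det J_T\equiv 0$ on $(0,1)^4$, then there exist an open interval $I\subset(0,1)$ and univariate invertible real-analytic functions $\varphi$, defined on $I$, and $h$, defined on $J:=\varphi(I)-\varphi(I)=\{\varphi(x)-\varphi(y):x,y\in I\}$, such that $\rho(x,y)=h(\varphi(x)-\varphi(y))$ for all $x,y\in I$.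
   Context: A curve $\gamma\subset\mathbb{R}^D$ means $\gamma=\gamma_{\mathbb{C}}\cap\mathbb{R}^D$, where $\gamma_{\mathbb{C}}$ is a one-dimensional irreducible algebraic curve in $\mathbb{C}^D$ which is the zero set of a system of exactly $D-1$ polynomials with real coefficients. $\rho(x,y)$ is the squared Euclidean distance between $\alpha(x)$ and $\alpha(y)$. *)

theory Defs
  imports "HOL-Analysis.Analysis"
begin

text \<open>Multivariate polynomials in the variables z_0,...,z_(D-1), represented by their
  coefficient function on exponent vectors (finite support, exponents zero beyond D).\<close>

definition is_mpoly :: "nat \<Rightarrow> ((nat \<Rightarrow> nat) \<Rightarrow> 'a::zero) \<Rightarrow> bool" where
  "is_mpoly D p \<longleftrightarrow> finite {m. p m \<noteq> 0} \<and> (\<forall>m. p m \<noteq> 0 \<longrightarrow> (\<forall>i\<ge>D. m i = 0))"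

definition mpoly_eval :: "nat \<Rightarrow> ((nat \<Rightarrow> nat) \<Rightarrow> complex) \<Rightarrow> (nat \<Rightarrow> complex) \<Rightarrow> complex" where
  "mpoly_eval D p z = (\<Sum>m\<in>{m. p m \<noteq> 0}. p m * (\<Prod>i<D. z i ^ m i))"

definition CD :: "nat \<Rightarrow> (nat \<Rightarrow> complex) set" where
  "CD D = {z. \<forall>i\<ge>D. z i = 0}"

definition zero_set :: "nat \<Rightarrow> ((nat \<Rightarrow> nat) \<Rightarrow> complex) set \<Rightarrow> (nat \<Rightarrow> complex) set" where
  "zero_set D F = {z \<in> CD D. \<forall>p\<in>F. mpoly_eval D p z = 0}"

definition alg_set :: "nat \<Rightarrow> (nat \<Rightarrow> complex) set \<Rightarrow> bool" where
  "alg_set D V \<longleftrightarrow> (\<exists>F. finite F \<and> (\<forall>p\<in>F. is_mpoly D p) \<and> V = zero_set D F)"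

definition irreducible_alg :: "nat \<Rightarrow> (nat \<Rightarrow> complex) set \<Rightarrow> bool" where
  "irreducible_alg D V \<longleftrightarrow> alg_set D V \<and> V \<noteq> {} \<and>
     (\<forall>A B. alg_set D A \<and> alg_set D B \<and> V = A \<union> B \<longrightarrow> V = A \<or> V = B)"

text \<open>Dimension one (Krull dimension of the irreducible algebraic set V): the longest
  chain of irreducible algebraic subsets ending at V has length exactly 1.\<close>
definition dim_one :: "nat \<Rightarrow> (nat \<Rightarrow> complex) set \<Rightarrow> bool" where
  "dim_one D V \<longleftrightarrow> (\<exists>W. irreducible_alg D W \<and> W \<subset> V) \<and>
     \<not> (\<exists>W1 W2. irreducible_alg D W1 \<and> irreducible_alg D W2 \<and> W1 \<subset> W2 \<and> W2 \<subset> V)"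

definition real_alg_curve :: "nat \<Rightarrow> (nat \<Rightarrow> real) set \<Rightarrow> bool" where
  "real_alg_curve D \<gamma> \<longleftrightarrow> (\<exists>P :: nat \<Rightarrow> (nat \<Rightarrow> nat) \<Rightarrow> complex. \<exists>\<gamma>C.
      (\<forall>j<D-1. is_mpoly D (P j) \<and> (\<forall>m. P j m \<in> \<real>)) \<and>
      \<gamma>C = zero_set D (P ` {..<D-1}) \<and>
      irreducible_alg D \<gamma>C \<and> dim_one D \<gamma>C \<and>
      \<gamma> = {x. (\<lambda>i. complex_of_real (x i)) \<in> \<gamma>C})"

definition real_analytic_on :: "real set \<Rightarrow> (real \<Rightarrow> real) \<Rightarrow> bool" where
  "real_analytic_on S f \<longleftrightarrow> (\<forall>x\<in>S. \<exists>r>0. \<exists>c::nat \<Rightarrow> real.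
      \<forall>y. \<bar>y - x\<bar> < r \<longrightarrow> (\<lambda>n. c n * (y - x) ^ n) sums f y)"

definition rho :: "nat \<Rightarrow> (real \<Rightarrow> nat \<Rightarrow> real) \<Rightarrow> real \<Rightarrow> real \<Rightarrow> real" where
  "rho D \<alpha> x y = (\<Sum>i<D. (\<alpha> x i - \<alpha> y i)^2)"

definition Tmap :: "nat \<Rightarrow> (real \<Rightarrow> nat \<Rightarrow> real) \<Rightarrow> real^4 \<Rightarrow> real^4" where
  "Tmap D \<alpha> p = vector [rho D \<alpha> (p$1) (p$3), rho D \<alpha> (p$1) (p$4),
                         rho D \<alpha> (p$2) (p$3), rho D \<alpha> (p$2) (p$4)]"

end

theory Submission
  imports Defs "HOL-Complex_Analysis.Complex_Analysis"
begin

(*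
  Write rho_dx x y for the derivative of rho(x, y) in x; by symmetry, rho_dx y x is the derivative
  in y. The Jacobian of T has the sparse pattern of a 4-cycle, so a nonzero kernel vector forces
  the cross identity
    rho_dx y x * rho_dx x y' * rho_dx x' y * rho_dx y' x'
      = rho_dx x y * rho_dx y' x * rho_dx y x' * rho_dx x' y'.
  Near a point where the tangent vectors of alpha are pairwise non-orthogonal, rho_dx x y has the
  sign of x - y. Freezing x' and y', the identity splits rho_dx x y / rho_dx y x as - A x * B y,
  and letting x tend to y, where this ratio tends to -1, gives A * B = 1. So the vector field
  (1 / A x, 1 / A y) annihilates the differential of rho: if phi' = A, then rho is invariant
  under translating phi x and phi y simultaneously, i.e. rho x y = h (phi x - phi y).
  Finally, h is injective on positive arguments because rho(., y) increases to the right of y.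
*)

unbundle no Formal_Power_Series.fps_syntax

text \<open>Real analyticity is handled through local holomorphic extensions, so that the closure
  properties are inherited from \<open>analytic_on\<close>.\<close>

definition real_analytic_at :: "(real \<Rightarrow> real) \<Rightarrow> real \<Rightarrow> bool" where
  "real_analytic_at f x \<longleftrightarrow> (\<exists>F. F analytic_on {complex_of_real x} \<and>
     (\<forall>\<^sub>F y in nhds x. F (complex_of_real y) = complex_of_real (f y)))"

lemma of_real_in_ball_iff: "complex_of_real y \<in> ball (complex_of_real x) r \<longleftrightarrow> \<bar>y - x\<bar> < r"
  by (simp add: dist_real_def abs_minus_commute)

lemma real_analytic_atI:
  assumes "r > 0" "F holomorphic_on ball (complex_of_real x) r"
    "\<And>y. \<bar>y - x\<bar> < r \<Longrightarrow> F (complex_of_real y) = complex_of_real (f y)"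
  shows "real_analytic_at f x"
proof -
  have "F analytic_on {complex_of_real x}"
    using assms(1,2) analytic_at_ball by blast
  moreover have "\<forall>\<^sub>F y in nhds x. F (complex_of_real y) = complex_of_real (f y)"
    unfolding eventually_nhds_metric dist_real_def using assms(1,3) by blast
  ultimately show ?thesis
    unfolding real_analytic_at_def by blast
qed

lemma real_analytic_atE:
  assumes "real_analytic_at f x"
  obtains r F where "r > 0" "F holomorphic_on ball (complex_of_real x) r"
    "\<And>y. \<bar>y - x\<bar> < r \<Longrightarrow> F (complex_of_real y) = complex_of_real (f y)"
proof -
  obtain F e d where "e > 0" and hol: "F holomorphic_on ball (complex_of_real x) e"
    and "d > 0" "\<And>y. \<bar>y - x\<bar> < d \<Longrightarrow> F (complex_of_real y) = complex_of_real (f y)"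
    using assms unfolding real_analytic_at_def analytic_at_ball eventually_nhds_metric dist_real_def
    by blast
  moreover have "F holomorphic_on ball (complex_of_real x) (min e d)"
    by (rule holomorphic_on_subset[OF hol], rule subset_ball) simp
  ultimately show thesis
    by (intro that[of "min e d" F]) auto
qed

lemma power_series_imp_real_analytic_at:
  assumes r: "r > 0" and c: "\<And>y. \<bar>y - x\<bar> < r \<Longrightarrow> (\<lambda>n. c n * (y - x) ^ n) sums f y"
  shows "real_analytic_at f x"
proof -
  define F where "F z = (\<Sum>n. complex_of_real (c n) * (z - complex_of_real x) ^ n)" for z
  have F_sums: "(\<lambda>n. complex_of_real (c n) * (z - complex_of_real x) ^ n) sums F z"
    if "z \<in> ball (complex_of_real x) r" for z
  proof -
    define t where "t = (norm (z - complex_of_real x) + r) / 2"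
    have t: "norm (z - complex_of_real x) < t" "t < r"
      using that by (auto simp: t_def dist_norm norm_minus_commute)
    have "summable (\<lambda>n. c n * t ^ n)"
      using c[of "x + t"] t norm_ge_zero[of "z - complex_of_real x"] by (auto simp: sums_iff)
    then have "summable (\<lambda>n. complex_of_real (c n * t ^ n))"
      by (simp only: summable_of_real_iff)
    then have "summable (\<lambda>n. complex_of_real (c n) * complex_of_real t ^ n)"
      by simp
    then have "summable (\<lambda>n. norm (complex_of_real (c n) * (z - complex_of_real x) ^ n))"
      by (rule powser_insidea) (use t norm_ge_zero[of "z - complex_of_real x"] in simp)
    then show ?thesis
      unfolding F_def by (rule summable_sums[OF summable_norm_cancel])
  qed
  show ?thesis
  proof (rule real_analytic_atI[OF r])
    show "F holomorphic_on ball (complex_of_real x) r"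
      by (rule power_series_holomorphic) (rule F_sums)
    fix y assume y: "\<bar>y - x\<bar> < r"
    have "(\<lambda>n. complex_of_real (c n) * (complex_of_real y - complex_of_real x) ^ n)
            sums complex_of_real (f y)"
      using sums_of_real[OF c[OF y]] by simp
    moreover have "(\<lambda>n. complex_of_real (c n) * (complex_of_real y - complex_of_real x) ^ n)
            sums F (complex_of_real y)"
      by (rule F_sums, rule of_real_in_ball_iff[THEN iffD2, OF y])
    ultimately show "F (complex_of_real y) = complex_of_real (f y)"
      using sums_unique2 by blast
  qed
qed

lemma real_analytic_at_imp_power_series:
  assumes "real_analytic_at f x"
  shows "\<exists>r>0. \<exists>c. \<forall>y. \<bar>y - x\<bar> < r \<longrightarrow> (\<lambda>n. c n * (y - x) ^ n) sums f y"
proof -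
  obtain r F where r: "r > 0" and hol: "F holomorphic_on ball (complex_of_real x) r"
    and eq: "\<And>y. \<bar>y - x\<bar> < r \<Longrightarrow> F (complex_of_real y) = complex_of_real (f y)"
    using real_analytic_atE[OF assms] by blast
  define a where "a n = (deriv ^^ n) F (complex_of_real x) / fact n" for n
  have "(\<lambda>n. Re (a n) * (y - x) ^ n) sums f y" if y: "\<bar>y - x\<bar> < r" for y
  proof -
    have "(\<lambda>n. a n * (complex_of_real y - complex_of_real x) ^ n) sums F (complex_of_real y)"
      unfolding a_def by (rule holomorphic_power_series[OF hol]) (rule of_real_in_ball_iff[THEN iffD2, OF y])
    then have "(\<lambda>n. Re (a n * (complex_of_real y - complex_of_real x) ^ n))
        sums Re (F (complex_of_real y))"
      by (rule sums_Re)
    then have "(\<lambda>n. Re (a n * (complex_of_real y - complex_of_real x) ^ n)) sums f y"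
      by (simp only: eq[OF y] Re_complex_of_real)
    moreover have "Re (a n * (complex_of_real y - complex_of_real x) ^ n) = Re (a n) * (y - x) ^ n" for n
      by (simp flip: of_real_diff of_real_power)
    ultimately show ?thesis by simp
  qed
  then show ?thesis
    by (intro exI[of _ r] conjI r exI[of _ "\<lambda>n. Re (a n)"] allI impI)
qed

lemma real_analytic_on_iff_real_analytic_at:
  "real_analytic_on S f \<longleftrightarrow> (\<forall>x\<in>S. real_analytic_at f x)"
proof
  assume "real_analytic_on S f"
  then show "\<forall>x\<in>S. real_analytic_at f x"
    unfolding real_analytic_on_def using power_series_imp_real_analytic_at by blast
next
  assume "\<forall>x\<in>S. real_analytic_at f x"
  then show "real_analytic_on S f"
    unfolding real_analytic_on_def using real_analytic_at_imp_power_series by blast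
qed

named_theorems real_analytic_intros

lemma real_analytic_at_const [real_analytic_intros]: "real_analytic_at (\<lambda>y. c) x"
  unfolding real_analytic_at_def by (intro exI[of _ "\<lambda>_. complex_of_real c"]) auto

lemma real_analytic_at_ident [real_analytic_intros]: "real_analytic_at (\<lambda>y. y) x"
  unfolding real_analytic_at_def by (intro exI[of _ "\<lambda>z. z"]) auto

lemma real_analytic_at_add [real_analytic_intros]:
  assumes "real_analytic_at f x" "real_analytic_at g x"
  shows "real_analytic_at (\<lambda>y. f y + g y) x"
proof -
  obtain F G where "F analytic_on {complex_of_real x}" "G analytic_on {complex_of_real x}"
    and F: "\<forall>\<^sub>F y in nhds x. F (complex_of_real y) = complex_of_real (f y)"
    and G: "\<forall>\<^sub>F y in nhds x. G (complex_of_real y) = complex_of_real (g y)"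
    using assms unfolding real_analytic_at_def by blast
  moreover have "\<forall>\<^sub>F y in nhds x. F (complex_of_real y) + G (complex_of_real y) = complex_of_real (f y + g y)"
    using F G by eventually_elim simp
  ultimately show ?thesis
    unfolding real_analytic_at_def by (intro exI[of _ "\<lambda>z. F z + G z"] conjI analytic_intros)
qed

lemma real_analytic_at_diff [real_analytic_intros]:
  assumes "real_analytic_at f x" "real_analytic_at g x"
  shows "real_analytic_at (\<lambda>y. f y - g y) x"
proof -
  obtain F G where "F analytic_on {complex_of_real x}" "G analytic_on {complex_of_real x}"
    and F: "\<forall>\<^sub>F y in nhds x. F (complex_of_real y) = complex_of_real (f y)"
    and G: "\<forall>\<^sub>F y in nhds x. G (complex_of_real y) = complex_of_real (g y)"
    using assms unfolding real_analytic_at_def by blast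
  moreover have "\<forall>\<^sub>F y in nhds x. F (complex_of_real y) - G (complex_of_real y) = complex_of_real (f y - g y)"
    using F G by eventually_elim simp
  ultimately show ?thesis
    unfolding real_analytic_at_def by (intro exI[of _ "\<lambda>z. F z - G z"] conjI analytic_intros)
qed

lemma real_analytic_at_minus [real_analytic_intros]:
  "real_analytic_at f x \<Longrightarrow> real_analytic_at (\<lambda>y. - f y) x"
  using real_analytic_at_diff[OF real_analytic_at_const, of f x 0] by simp

lemma real_analytic_at_mult [real_analytic_intros]:
  assumes "real_analytic_at f x" "real_analytic_at g x"
  shows "real_analytic_at (\<lambda>y. f y * g y) x"
proof -
  obtain F G where "F analytic_on {complex_of_real x}" "G analytic_on {complex_of_real x}"
    and F: "\<forall>\<^sub>F y in nhds x. F (complex_of_real y) = complex_of_real (f y)"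
    and G: "\<forall>\<^sub>F y in nhds x. G (complex_of_real y) = complex_of_real (g y)"
    using assms unfolding real_analytic_at_def by blast
  moreover have "\<forall>\<^sub>F y in nhds x. F (complex_of_real y) * G (complex_of_real y) = complex_of_real (f y * g y)"
    using F G by eventually_elim simp
  ultimately show ?thesis
    unfolding real_analytic_at_def by (intro exI[of _ "\<lambda>z. F z * G z"] conjI analytic_intros)
qed

lemma real_analytic_at_divide [real_analytic_intros]:
  assumes "real_analytic_at f x" "real_analytic_at g x" "g x \<noteq> 0"
  shows "real_analytic_at (\<lambda>y. f y / g y) x"
proof -
  obtain F G where "F analytic_on {complex_of_real x}" "G analytic_on {complex_of_real x}"
    and F: "\<forall>\<^sub>F y in nhds x. F (complex_of_real y) = complex_of_real (f y)"
    and G: "\<forall>\<^sub>F y in nhds x. G (complex_of_real y) = complex_of_real (g y)"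
    using assms unfolding real_analytic_at_def by blast
  moreover have "G (complex_of_real x) \<noteq> 0"
    using eventually_nhds_x_imp_x[OF G] assms(3) by simp
  moreover have "\<forall>\<^sub>F y in nhds x. F (complex_of_real y) / G (complex_of_real y) = complex_of_real (f y / g y)"
    using F G by eventually_elim simp
  ultimately show ?thesis
    unfolding real_analytic_at_def by (intro exI[of _ "\<lambda>z. F z / G z"] conjI analytic_intros) auto
qed

lemma real_analytic_at_sum [real_analytic_intros]:
  "(\<And>i. i \<in> I \<Longrightarrow> real_analytic_at (f i) x) \<Longrightarrow> real_analytic_at (\<lambda>y. \<Sum>i\<in>I. f i y) x"
  by (induction I rule: infinite_finite_induct) (auto intro: real_analytic_at_const real_analytic_at_add)

lemma real_analytic_extension_derivative:
  assumes F: "F analytic_on {complex_of_real x}"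
    and eq: "\<forall>\<^sub>F y in nhds x. F (complex_of_real y) = complex_of_real (f y)"
  shows "(f has_real_derivative deriv f x) (at x)"
    and "deriv F (complex_of_real x) = complex_of_real (deriv f x)"
proof -
  define D where "D = deriv F (complex_of_real x)"
  have "(F has_field_derivative D) (at (complex_of_real x))"
    unfolding D_def by (rule field_differentiable_derivI[OF analytic_on_imp_differentiable_at[OF F]]) simp
  then have "((\<lambda>t. F (complex_of_real t)) has_vector_derivative D) (at x)"
    by (rule has_vector_derivative_real_field)
  moreover have "\<forall>\<^sub>F y in at x. F (complex_of_real y) = complex_of_real (f y)"
    using eq by (auto simp: eventually_at_filter elim: eventually_mono)
  ultimately have "((\<lambda>t. complex_of_real (f t)) has_vector_derivative D) (at x)"
    unfolding has_vector_derivative_def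
    by (rule has_derivative_transform_eventually) (use eventually_nhds_x_imp_x[OF eq] in simp_all)
  then have re: "(f has_real_derivative Re D) (at x)"
    and im: "((\<lambda>t. 0) has_real_derivative Im D) (at x)"
    by (simp_all add: has_vector_derivative_complex_iff)
  have "Im D = 0" using DERIV_unique[OF im DERIV_const] .
  moreover have "deriv f x = Re D" using DERIV_imp_deriv[OF re] .
  ultimately show "(f has_real_derivative deriv f x) (at x)" "D = complex_of_real (deriv f x)"
    using re by (simp_all add: complex_eq_iff)
qed

lemma real_analytic_at_DERIV:
  "real_analytic_at f x \<Longrightarrow> (f has_real_derivative deriv f x) (at x)"
  unfolding real_analytic_at_def using real_analytic_extension_derivative(1) by blast

lemma real_analytic_at_isCont: "real_analytic_at f x \<Longrightarrow> isCont f x"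
  using real_analytic_at_DERIV DERIV_isCont by blast

lemma real_analytic_at_deriv [real_analytic_intros]:
  assumes "real_analytic_at f x"
  shows "real_analytic_at (deriv f) x"
proof -
  obtain F where F: "F analytic_on {complex_of_real x}"
    and eq: "\<forall>\<^sub>F y in nhds x. F (complex_of_real y) = complex_of_real (f y)"
    using assms unfolding real_analytic_at_def by blast
  obtain e where "e > 0" and hol: "F holomorphic_on ball (complex_of_real x) e"
    using F analytic_at_ball by blast
  then have "\<forall>\<^sub>F y in nhds x. F analytic_on {complex_of_real y}"
    unfolding eventually_nhds_metric
    using holomorphic_on_imp_analytic_at[OF hol open_ball]
    by (intro exI[of _ e]) (auto simp: dist_real_def dist_commute)
  moreover have "\<forall>\<^sub>F y in nhds x. \<forall>\<^sub>F z in nhds y. F (complex_of_real z) = complex_of_real (f z)"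
    using eq by (simp add: eventually_eventually)
  ultimately have "\<forall>\<^sub>F y in nhds x. deriv F (complex_of_real y) = complex_of_real (deriv f y)"
    by eventually_elim (rule real_analytic_extension_derivative(2))
  then show ?thesis
    unfolding real_analytic_at_def using F analytic_deriv by blast
qed

lemma real_analytic_at_compose:
  assumes g: "real_analytic_at g (f x)" and f: "real_analytic_at f x"
  shows "real_analytic_at (\<lambda>y. g (f y)) x"
proof -
  obtain F where F: "F analytic_on {complex_of_real x}"
    and F_eq: "\<forall>\<^sub>F y in nhds x. F (complex_of_real y) = complex_of_real (f y)"
    using f unfolding real_analytic_at_def by blast
  obtain G where G: "G analytic_on {complex_of_real (f x)}"
    and G_eq: "\<forall>\<^sub>F u in nhds (f x). G (complex_of_real u) = complex_of_real (g u)"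
    using g unfolding real_analytic_at_def by blast
  have "G analytic_on F ` {complex_of_real x}"
    using G eventually_nhds_x_imp_x[OF F_eq] by simp
  then have "(G \<circ> F) analytic_on {complex_of_real x}"
    by (rule analytic_on_compose[OF F])
  moreover have "filterlim f (nhds (f x)) (nhds x)"
    using real_analytic_at_isCont[OF f] by (simp add: isCont_def tendsto_at_iff_tendsto_nhds)
  then have "\<forall>\<^sub>F y in nhds x. G (complex_of_real (f y)) = complex_of_real (g (f y))"
    by (rule eventually_compose_filterlim[OF G_eq])
  then have "\<forall>\<^sub>F y in nhds x. (G \<circ> F) (complex_of_real y) = complex_of_real (g (f y))"
    using F_eq by eventually_elim simp
  ultimately show ?thesis
    unfolding real_analytic_at_def by blast
qed


lemma real_analytic_at_primitive:
  assumes ab: "a < x" "x < b"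
    and der: "\<And>y. a < y \<Longrightarrow> y < b \<Longrightarrow> (\<phi> has_real_derivative A y) (at y)"
    and A: "real_analytic_at A x"
  shows "real_analytic_at \<phi> x"
proof -
  obtain r F where "r > 0" and hol: "F holomorphic_on ball (complex_of_real x) r"
    and F_eq: "\<And>y. \<bar>y - x\<bar> < r \<Longrightarrow> F (complex_of_real y) = complex_of_real (A y)"
    using real_analytic_atE[OF A] by blast
  define s where "s = min r (min (x - a) (b - x))"
  have s: "s > 0" "s \<le> r" "s \<le> x - a" "s \<le> b - x"
    using ab \<open>r > 0\<close> by (auto simp: s_def)
  have hol_s: "F holomorphic_on ball (complex_of_real x) s"
    by (rule holomorphic_on_subset[OF hol], rule subset_ball) (rule s(2))
  obtain P where P: "\<And>z. z \<in> ball (complex_of_real x) s \<Longrightarrow>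
      (P has_field_derivative F z) (at z within ball (complex_of_real x) s)"
    using holomorphic_convex_primitive'[OF convex_ball open_ball hol_s] by blast
  define \<Phi> where "\<Phi> z = P z - P (complex_of_real x) + complex_of_real (\<phi> x)" for z
  have \<Phi>_der: "(\<Phi> has_field_derivative F z) (at z)" if "z \<in> ball (complex_of_real x) s" for z
    using P[OF that] at_within_open[OF that open_ball] unfolding \<Phi>_def
    by (auto intro!: derivative_eq_intros)
  have "\<Phi> holomorphic_on ball (complex_of_real x) s"
    unfolding holomorphic_on_open[OF open_ball] using \<Phi>_der by blast
  moreover have "\<Phi> (complex_of_real y) = complex_of_real (\<phi> y)" if y: "\<bar>y - x\<bar> < s" for y
  proof -
    define I where "I = {x - s<..<x + s}"
    define g where "g t = \<Phi> (complex_of_real t) - complex_of_real (\<phi> t)" for t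
    have "(g has_derivative (\<lambda>h. 0)) (at t within I)" if t: "t \<in> I" for t
    proof -
      have t_near: "\<bar>t - x\<bar> < s" using t by (auto simp: I_def abs_less_iff)
      have "((\<lambda>t. \<Phi> (complex_of_real t)) has_vector_derivative F (complex_of_real t)) (at t)"
        using has_vector_derivative_real_field[OF \<Phi>_der] t_near of_real_in_ball_iff by blast
      moreover have "((\<lambda>t. complex_of_real (\<phi> t)) has_vector_derivative complex_of_real (A t)) (at t)"
        by (rule has_vector_derivative_of_real[OF der]) (use t_near s in \<open>auto simp: abs_less_iff\<close>)
      moreover have "F (complex_of_real t) = complex_of_real (A t)"
        using F_eq t_near s(2) by simp
      ultimately have "(g has_vector_derivative 0) (at t)"
        unfolding g_def using has_vector_derivative_diff by fastforce
      then show ?thesis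
        by (auto simp: has_vector_derivative_def intro: has_derivative_at_withinI)
    qed
    moreover have "x \<in> I" "y \<in> I" using s(1) y by (auto simp: I_def abs_less_iff)
    ultimately have "g y = g x"
      by (intro has_derivative_zero_unique[of I g]) (auto simp: I_def)
    then show ?thesis by (simp add: g_def \<Phi>_def)
  qed
  ultimately show ?thesis
    by (rule real_analytic_atI[OF s(1)])
qed

lemma real_analytic_at_inverse:
  assumes \<phi>: "real_analytic_at \<phi> x" and nz: "deriv \<phi> x \<noteq> 0" and "e > 0"
    and inv: "\<And>w. \<bar>w - \<phi> x\<bar> < e \<Longrightarrow> \<phi> (\<psi> w) = w"
    and cont: "isCont \<psi> (\<phi> x)" and \<psi>_x: "\<psi> (\<phi> x) = x"
  shows "real_analytic_at \<psi> (\<phi> x)"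
proof -
  obtain r F where "r > 0" and hol: "F holomorphic_on ball (complex_of_real x) r"
    and F_eq: "\<And>y. \<bar>y - x\<bar> < r \<Longrightarrow> F (complex_of_real y) = complex_of_real (\<phi> y)"
    using real_analytic_atE[OF \<phi>] by blast
  have "\<forall>\<^sub>F y in nhds x. F (complex_of_real y) = complex_of_real (\<phi> y)"
    unfolding eventually_nhds_metric dist_real_def using \<open>r > 0\<close> F_eq by blast
  then have "deriv F (complex_of_real x) = complex_of_real (deriv \<phi> x)"
    using real_analytic_extension_derivative(2) holomorphic_on_imp_analytic_at[OF hol open_ball]
      \<open>r > 0\<close> by simp
  then obtain r1 where "r1 > 0" and r1_sub: "ball (complex_of_real x) r1 \<subseteq> ball (complex_of_real x) r"
    and inj: "inj_on F (ball (complex_of_real x) r1)"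
    using has_complex_derivative_locally_injective[OF hol _ open_ball, of "complex_of_real x"]
      nz \<open>r > 0\<close> by auto
  have hol1: "F holomorphic_on ball (complex_of_real x) r1"
    by (rule holomorphic_on_subset[OF hol r1_sub])
  obtain G where hol_G: "G holomorphic_on F ` ball (complex_of_real x) r1"
    and G_F: "\<And>z. z \<in> ball (complex_of_real x) r1 \<Longrightarrow> G (F z) = z"
    using holomorphic_has_inverse[OF hol1 open_ball inj] by metis
  have "open (F ` ball (complex_of_real x) r1)"
    by (rule open_mapping_thm3[OF hol1 open_ball inj])
  moreover have "complex_of_real (\<phi> x) \<in> F ` ball (complex_of_real x) r1"
    using F_eq[of x] \<open>r > 0\<close> \<open>r1 > 0\<close> by (metis abs_zero centre_in_ball diff_self image_eqI)
  ultimately obtain e2 where "e2 > 0"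
    and e2: "ball (complex_of_real (\<phi> x)) e2 \<subseteq> F ` ball (complex_of_real x) r1"
    unfolding open_contains_ball by metis
  obtain d where "d > 0" and d: "\<And>w. dist w (\<phi> x) < d \<Longrightarrow> dist (\<psi> w) x < r1"
    using cont \<open>r1 > 0\<close> \<psi>_x unfolding continuous_at_eps_delta by metis
  define s where "s = min e2 (min d e)"
  have "s > 0" using \<open>e2 > 0\<close> \<open>d > 0\<close> \<open>e > 0\<close> by (simp add: s_def)
  moreover have "G holomorphic_on ball (complex_of_real (\<phi> x)) s"
    by (rule holomorphic_on_subset[OF hol_G]) (use e2 subset_ball[of s e2] in \<open>auto simp: s_def\<close>)
  moreover have "G (complex_of_real w) = complex_of_real (\<psi> w)" if w: "\<bar>w - \<phi> x\<bar> < s" for w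
  proof -
    have "\<bar>\<psi> w - x\<bar> < r1"
      using d[of w] w by (simp add: s_def dist_real_def)
    then have in_ball: "complex_of_real (\<psi> w) \<in> ball (complex_of_real x) r1"
      by (rule of_real_in_ball_iff[THEN iffD2])
    then have "F (complex_of_real (\<psi> w)) = complex_of_real (\<phi> (\<psi> w))"
      using r1_sub F_eq of_real_in_ball_iff by blast
    also have "\<dots> = complex_of_real w"
      using inv[of w] w by (simp add: s_def)
    finally show ?thesis
      using G_F[OF in_ball] by simp
  qed
  ultimately show ?thesis
    by (rule real_analytic_atI)
qed

lemma vector_4_nth [simp]:
  "(vector [a, b, c, d] :: ('a::zero)^4) $ 1 = a" "(vector [a, b, c, d] :: ('a::zero)^4) $ 2 = b"
  "(vector [a, b, c, d] :: ('a::zero)^4) $ 3 = c" "(vector [a, b, c, d] :: ('a::zero)^4) $ 4 = d"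
  unfolding vector_def by simp_all

lemma sparse_kernel_identity:
  fixes a b c d e f g k w x y z :: "'a::idom"
  assumes "a * w + b * y = 0" "c * w + d * z = 0" "e * x + f * y = 0" "g * x + k * z = 0"
    and "w \<noteq> 0 \<or> x \<noteq> 0 \<or> y \<noteq> 0 \<or> z \<noteq> 0"
  shows "b * c * e * k = a * d * f * g"
proof -
  have "(b * c * e * k - a * d * f * g) * w = 0" "(b * c * e * k - a * d * f * g) * x = 0"
    "(b * c * e * k - a * d * f * g) * y = 0" "(b * c * e * k - a * d * f * g) * z = 0"
    using assms(1-4) by algebra+
  then show ?thesis
    using assms(5) by auto
qed

locale analytic_arc =
  fixes D :: nat and \<alpha> :: "real \<Rightarrow> nat \<Rightarrow> real"
  assumes D_pos: "1 \<le> D"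
    and first_coord: "\<And>t. t \<in> {0<..<1} \<Longrightarrow> \<alpha> t 0 = t"
    and analytic: "\<And>i. i < D \<Longrightarrow> real_analytic_on {0<..<1} (\<lambda>t. \<alpha> t i)"
begin

abbreviation \<alpha>' :: "nat \<Rightarrow> real \<Rightarrow> real" where
  "\<alpha>' i \<equiv> deriv (\<lambda>t. \<alpha> t i)"

lemma coord_real_analytic_at: "i < D \<Longrightarrow> t \<in> {0<..<1} \<Longrightarrow> real_analytic_at (\<lambda>t. \<alpha> t i) t"
  using analytic real_analytic_on_iff_real_analytic_at by blast

lemma coord_has_derivative:
  "i < D \<Longrightarrow> t \<in> {0<..<1} \<Longrightarrow> ((\<lambda>t. \<alpha> t i) has_real_derivative \<alpha>' i t) (at t)"
  by (rule real_analytic_at_DERIV[OF coord_real_analytic_at])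

lemma coord_deriv_real_analytic_at: "i < D \<Longrightarrow> t \<in> {0<..<1} \<Longrightarrow> real_analytic_at (\<alpha>' i) t"
  by (rule real_analytic_at_deriv[OF coord_real_analytic_at])

lemma first_coord_deriv: "t \<in> {0<..<1} \<Longrightarrow> \<alpha>' 0 t = 1"
  by (rule DERIV_imp_deriv, rule has_field_derivative_transform_within_open[of "\<lambda>t. t" 1 t "{0<..<1}"])
     (auto simp: first_coord)

lemma sum_sq_deriv_ge_1: "t \<in> {0<..<1} \<Longrightarrow> 1 \<le> (\<Sum>i<D. \<alpha>' i t * \<alpha>' i t)"
  using sum_mono2[of "{..<D}" "{0}" "\<lambda>i. \<alpha>' i t * \<alpha>' i t"] D_pos first_coord_deriv by auto

definition rho_dx :: "real \<Rightarrow> real \<Rightarrow> real" where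
  "rho_dx x y = (\<Sum>i<D. 2 * (\<alpha> x i - \<alpha> y i) * \<alpha>' i x)"

lemma rho_dx_diag [simp]: "rho_dx x x = 0"
  by (simp add: rho_dx_def)

lemma rho_dx_real_analytic_at:
  assumes "x \<in> {0<..<1}" "y \<in> {0<..<1}"
  shows "real_analytic_at (\<lambda>x. rho_dx x y) x" "real_analytic_at (\<lambda>y. rho_dx x y) y"
  unfolding rho_dx_def using assms
  by (intro real_analytic_intros coord_real_analytic_at coord_deriv_real_analytic_at; simp)+

lemma rho_has_derivative:
  fixes X Y :: "'a::real_normed_vector \<Rightarrow> real"
  assumes X: "(X has_derivative X') (at p)" and Y: "(Y has_derivative Y') (at p)"
    and X_in: "X p \<in> {0<..<1}" and Y_in: "Y p \<in> {0<..<1}"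
  shows "((\<lambda>q. rho D \<alpha> (X q) (Y q)) has_derivative
           (\<lambda>v. rho_dx (X p) (Y p) * X' v + rho_dx (Y p) (X p) * Y' v)) (at p)"
proof -
  have coord: "((\<lambda>q. \<alpha> (Z q) i) has_derivative (\<lambda>v. \<alpha>' i (Z p) * Z' v)) (at p)"
    if "i < D" "(Z has_derivative Z') (at p)" "Z p \<in> {0<..<1}" for i Z Z'
    using DERIV_compose_FDERIV[OF coord_has_derivative[OF that(1,3)] that(2)] by (simp add: mult.commute)
  have "((\<lambda>q. \<Sum>i<D. (\<alpha> (X q) i - \<alpha> (Y q) i)\<^sup>2) has_derivative
      (\<lambda>v. \<Sum>i<D. 2 * (\<alpha> (X p) i - \<alpha> (Y p) i) * (\<alpha>' i (X p) * X' v - \<alpha>' i (Y p) * Y' v))) (at p)"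
  proof (rule has_derivative_sum)
    fix i assume "i \<in> {..<D}"
    then have "((\<lambda>q. \<alpha> (X q) i - \<alpha> (Y q) i) has_derivative
        (\<lambda>v. \<alpha>' i (X p) * X' v - \<alpha>' i (Y p) * Y' v)) (at p)"
      by (intro has_derivative_diff coord X Y X_in Y_in) auto
    from has_derivative_power[OF this, of 2]
    show "((\<lambda>q. (\<alpha> (X q) i - \<alpha> (Y q) i)\<^sup>2) has_derivative
        (\<lambda>v. 2 * (\<alpha> (X p) i - \<alpha> (Y p) i) * (\<alpha>' i (X p) * X' v - \<alpha>' i (Y p) * Y' v))) (at p)"
      by (simp add: power2_eq_square algebra_simps)
  qed
  moreover have "(\<Sum>i<D. 2 * (\<alpha> (X p) i - \<alpha> (Y p) i) * (\<alpha>' i (X p) * X' v - \<alpha>' i (Y p) * Y' v))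
      = rho_dx (X p) (Y p) * X' v + rho_dx (Y p) (X p) * Y' v" for v
    unfolding rho_dx_def sum_distrib_right sum.distrib[symmetric]
    by (rule sum.cong) (auto simp: algebra_simps)
  ultimately show ?thesis
    unfolding rho_def by simp
qed

lemma rho_has_real_derivative:
  assumes "(X has_real_derivative X') (at t)" "(Y has_real_derivative Y') (at t)"
    and "X t \<in> {0<..<1}" "Y t \<in> {0<..<1}"
  shows "((\<lambda>t. rho D \<alpha> (X t) (Y t)) has_real_derivative
           rho_dx (X t) (Y t) * X' + rho_dx (Y t) (X t) * Y') (at t)"
  unfolding has_field_derivative_def
  by (rule has_derivative_eq_rhs[OF rho_has_derivative[OF assms(1,2)[unfolded has_field_derivative_def]
      assms(3,4)]]) (simp add: fun_eq_iff algebra_simps)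

lemma Tmap_has_derivative:
  assumes p: "\<And>k. p $ k \<in> {0<..<1}"
  shows "(Tmap D \<alpha> has_derivative (\<lambda>w. vector
     [rho_dx (p$1) (p$3) * w$1 + rho_dx (p$3) (p$1) * w$3,
      rho_dx (p$1) (p$4) * w$1 + rho_dx (p$4) (p$1) * w$4,
      rho_dx (p$2) (p$3) * w$2 + rho_dx (p$3) (p$2) * w$3,
      rho_dx (p$2) (p$4) * w$2 + rho_dx (p$4) (p$2) * w$4])) (at p)"
proof (rule has_derivative_componentwise_within[THEN iffD2], rule ballI)
  have entry: "((\<lambda>q::real^4. rho D \<alpha> (q$j) (q$k)) has_derivative
      (\<lambda>w. rho_dx (p$j) (p$k) * w$j + rho_dx (p$k) (p$j) * w$k)) (at p)" for j k
    by (intro rho_has_derivative bounded_linear_imp_has_derivative bounded_linear_vec_nth p)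
  fix b :: "real^4" assume "b \<in> Basis"
  then obtain k where b: "b = axis k 1" by (auto simp: Basis_vec_def)
  have "k = 1 \<or> k = 2 \<or> k = 3 \<or> k = 4" by (rule exhaust_4)
  then show "((\<lambda>q. Tmap D \<alpha> q \<bullet> b) has_derivative (\<lambda>w. vector
     [rho_dx (p$1) (p$3) * w$1 + rho_dx (p$3) (p$1) * w$3,
      rho_dx (p$1) (p$4) * w$1 + rho_dx (p$4) (p$1) * w$4,
      rho_dx (p$2) (p$3) * w$2 + rho_dx (p$3) (p$2) * w$3,
      rho_dx (p$2) (p$4) * w$2 + rho_dx (p$4) (p$2) * w$4] \<bullet> b)) (at p)"
    unfolding b inner_axis Tmap_def using entry by (elim disjE) simp_all
qed

lemma inner_deriv_pos_near:
  assumes "t0 \<in> {0<..<1}"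
  obtains \<delta> where "\<delta> > 0" "{t0 - \<delta><..<t0 + \<delta>} \<subseteq> {0<..<1}"
    "\<And>s t. s \<in> {t0 - \<delta><..<t0 + \<delta>} \<Longrightarrow> t \<in> {t0 - \<delta><..<t0 + \<delta>} \<Longrightarrow> 0 < (\<Sum>i<D. \<alpha>' i s * \<alpha>' i t)"
proof -
  define P where "P s t = (\<Sum>i<D. \<alpha>' i s * \<alpha>' i t)" for s t
  have cont: "isCont (\<alpha>' i) t0" if "i < D" for i
    using real_analytic_at_isCont[OF coord_deriv_real_analytic_at[OF that assms]] .
  have "(fst \<longlongrightarrow> t0) (nhds (t0, t0))" "(snd \<longlongrightarrow> t0) (nhds (t0, t0))"
    using tendsto_fst[OF filterlim_ident[of "nhds (t0, t0)"]] tendsto_snd[OF filterlim_ident[of "nhds (t0, t0)"]]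
    by simp_all
  then have "((\<lambda>q. P (fst q) (snd q)) \<longlongrightarrow> P t0 t0) (nhds t0 \<times>\<^sub>F nhds t0)"
    unfolding P_def nhds_prod[symmetric]
    by (intro tendsto_sum tendsto_mult isCont_tendsto_compose[OF cont]) simp_all
  moreover have "0 < P t0 t0"
    using sum_sq_deriv_ge_1[OF assms] by (simp add: P_def)
  ultimately have "\<forall>\<^sub>F q in nhds t0 \<times>\<^sub>F nhds t0. 0 < P (fst q) (snd q)"
    by (rule order_tendstoD)
  then obtain Q where Q_near: "\<forall>\<^sub>F s in nhds t0. Q s" and Q: "\<And>s t. Q s \<Longrightarrow> Q t \<Longrightarrow> 0 < P s t"
    unfolding eventually_prod_same by auto
  have "\<forall>\<^sub>F s in nhds t0. s \<in> {0<..<1}"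
    using assms by (intro eventually_nhds_in_open) auto
  with Q_near have "\<forall>\<^sub>F s in nhds t0. Q s \<and> s \<in> {0<..<1}"
    by (rule eventually_conj)
  then obtain \<delta> where "\<delta> > 0" and \<delta>: "\<And>s. \<bar>s - t0\<bar> < \<delta> \<Longrightarrow> Q s \<and> s \<in> {0<..<1}"
    unfolding eventually_nhds_metric dist_real_def by blast
  have near: "Q s \<and> s \<in> {0<..<1}" if "s \<in> {t0 - \<delta><..<t0 + \<delta>}" for s
    using \<delta>[of s] that by (simp add: abs_less_iff)
  show thesis
  proof (rule that[OF \<open>\<delta> > 0\<close>])
    show "{t0 - \<delta><..<t0 + \<delta>} \<subseteq> {0<..<1}"
      using near by blast
    show "0 < (\<Sum>i<D. \<alpha>' i s * \<alpha>' i t)"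
      if "s \<in> {t0 - \<delta><..<t0 + \<delta>}" "t \<in> {t0 - \<delta><..<t0 + \<delta>}" for s t
      using Q near that unfolding P_def by blast
  qed
qed

lemma rho_dx_ratio_tendsto:
  assumes y: "y \<in> {0<..<1}"
  shows "((\<lambda>x. rho_dx x y / rho_dx y x) \<longlongrightarrow> -1) (at y)"
proof -
  define q where "q i x = (\<alpha> x i - \<alpha> y i) / (x - y)" for i x
  have q: "(q i \<longlongrightarrow> \<alpha>' i y) (at y)" if "i < D" for i
    using coord_has_derivative[OF that y] unfolding q_def by (simp add: has_field_derivative_iff)
  have cont: "(\<alpha>' i \<longlongrightarrow> \<alpha>' i y) (at y)" if "i < D" for i
    using real_analytic_at_isCont[OF coord_deriv_real_analytic_at[OF that y]] by (simp add: isCont_def)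
  define N where "N x = (\<Sum>i<D. 2 * q i x * \<alpha>' i x)" for x
  define M where "M x = (\<Sum>i<D. - 2 * q i x * \<alpha>' i y)" for x
  have "(N \<longlongrightarrow> 2 * (\<Sum>i<D. \<alpha>' i y * \<alpha>' i y)) (at y)"
    unfolding N_def sum_distrib_left by (intro tendsto_sum) (auto intro!: tendsto_eq_intros q cont)
  moreover have "(M \<longlongrightarrow> - 2 * (\<Sum>i<D. \<alpha>' i y * \<alpha>' i y)) (at y)"
    unfolding M_def sum_distrib_left by (intro tendsto_sum) (auto intro!: tendsto_eq_intros q)
  moreover have "(\<Sum>i<D. \<alpha>' i y * \<alpha>' i y) \<noteq> 0"
    using sum_sq_deriv_ge_1[OF y] by linarith
  ultimately have "((\<lambda>x. N x / M x) \<longlongrightarrow> -1) (at y)"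
    by (auto dest: tendsto_divide)
  moreover have "\<forall>\<^sub>F x in at y. N x / M x = rho_dx x y / rho_dx y x"
    unfolding eventually_at_filter
  proof (rule always_eventually, intro allI impI)
    fix x :: real assume "x \<noteq> y"
    then have "rho_dx x y = (x - y) * N x" "rho_dx y x = (x - y) * M x"
      unfolding rho_dx_def N_def M_def q_def sum_distrib_left by (auto intro!: sum.cong)
    then show "N x / M x = rho_dx x y / rho_dx y x"
      using \<open>x \<noteq> y\<close> by simp
  qed
  ultimately show ?thesis
    by (rule Lim_transform_eventually)
qed

end

locale degenerate_arc = analytic_arc +
  assumes det_jacobian_zero:
    "\<And>p. (\<And>k. p $ k \<in> {0<..<1}) \<Longrightarrow> det (jacobian (Tmap D \<alpha>) (at p)) = 0"
begin

lemma cross_identity: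
  assumes "x \<in> {0<..<1}" "x' \<in> {0<..<1}" "y \<in> {0<..<1}" "y' \<in> {0<..<1}"
  shows "rho_dx y x * rho_dx x y' * rho_dx x' y * rho_dx y' x'
       = rho_dx x y * rho_dx y' x * rho_dx y x' * rho_dx x' y'"
proof -
  define p :: "real^4" where "p = vector [x, x', y, y']"
  have p: "p $ k \<in> {0<..<1}" for k
    using exhaust_4[of k] assms by (auto simp: p_def)
  define L :: "real^4 \<Rightarrow> real^4" where "L w = (vector
     [rho_dx (p$1) (p$3) * w$1 + rho_dx (p$3) (p$1) * w$3,
      rho_dx (p$1) (p$4) * w$1 + rho_dx (p$4) (p$1) * w$4,
      rho_dx (p$2) (p$3) * w$2 + rho_dx (p$3) (p$2) * w$3,
      rho_dx (p$2) (p$4) * w$2 + rho_dx (p$4) (p$2) * w$4] :: real^4)" for w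
  have T': "(Tmap D \<alpha> has_derivative L) (at p)"
    unfolding L_def by (rule Tmap_has_derivative[OF p])
  have "linear L"
    using has_derivative_linear[OF T'] .
  moreover have "det (matrix L) = 0"
    using det_jacobian_zero[OF p] frechet_derivative_at[OF T'] by (simp add: jacobian_def)
  ultimately have "\<not> inj L"
    using det_nz_iff_inj by blast
  then obtain v where v: "L v = 0" "v \<noteq> 0"
    using linear_injective_0[OF \<open>linear L\<close>] by blast
  then have "L v $ 1 = 0" "L v $ 2 = 0" "L v $ 3 = 0" "L v $ 4 = 0"
    by simp_all
  then have "rho_dx x y * v$1 + rho_dx y x * v$3 = 0" "rho_dx x y' * v$1 + rho_dx y' x * v$4 = 0"
    "rho_dx x' y * v$2 + rho_dx y x' * v$3 = 0" "rho_dx x' y' * v$2 + rho_dx y' x' * v$4 = 0"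
    by (simp_all add: L_def p_def)
  moreover obtain j where "v $ j \<noteq> 0"
    using v(2) by (metis vec_eq_iff zero_index)
  then have "v$1 \<noteq> 0 \<or> v$2 \<noteq> 0 \<or> v$3 \<noteq> 0 \<or> v$4 \<noteq> 0"
    using exhaust_4[of j] by auto
  ultimately show ?thesis
    by (rule sparse_kernel_identity)
qed

end

locale degenerate_arc_chart = degenerate_arc +
  fixes t0 \<delta> :: real
  assumes \<delta>_pos: "\<delta> > 0"
    and chart_sub: "{t0 - \<delta><..<t0 + \<delta>} \<subseteq> {0<..<1}"
    and inner_deriv_pos:
      "\<And>s t. s \<in> {t0 - \<delta><..<t0 + \<delta>} \<Longrightarrow> t \<in> {t0 - \<delta><..<t0 + \<delta>} \<Longrightarrow> 0 < (\<Sum>i<D. \<alpha>' i s * \<alpha>' i t)"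
begin

definition tangent_coord :: "real \<Rightarrow> real \<Rightarrow> real" where
  "tangent_coord c t = (\<Sum>i<D. \<alpha>' i c * \<alpha> t i)"

lemma tangent_coord_strict_mono:
  assumes "c \<in> {t0 - \<delta><..<t0 + \<delta>}" "s \<in> {t0 - \<delta><..<t0 + \<delta>}" "t \<in> {t0 - \<delta><..<t0 + \<delta>}" "s < t"
  shows "tangent_coord c s < tangent_coord c t"
proof (rule DERIV_pos_imp_increasing[OF \<open>s < t\<close>])
  fix u assume "s \<le> u" "u \<le> t"
  then have u: "u \<in> {t0 - \<delta><..<t0 + \<delta>}" using assms by auto
  have "(tangent_coord c has_real_derivative (\<Sum>i<D. \<alpha>' i c * \<alpha>' i u)) (at u)"
    unfolding tangent_coord_def[abs_def]
    by (intro DERIV_sum DERIV_cmult coord_has_derivative) (use u chart_sub in auto)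
  then show "\<exists>y. (tangent_coord c has_real_derivative y) (at u) \<and> y > 0"
    using inner_deriv_pos[OF assms(1) u] by blast
qed

lemma rho_dx_eq_tangent_coord: "rho_dx x y = 2 * (tangent_coord x x - tangent_coord x y)"
  unfolding rho_dx_def tangent_coord_def
  by (simp add: sum_distrib_left sum_subtractf[symmetric] algebra_simps)

lemma rho_dx_pos:
  "x \<in> {t0 - \<delta><..<t0 + \<delta>} \<Longrightarrow> y \<in> {t0 - \<delta><..<t0 + \<delta>} \<Longrightarrow> y < x \<Longrightarrow> 0 < rho_dx x y"
  using tangent_coord_strict_mono[of x y x] by (simp add: rho_dx_eq_tangent_coord)

lemma rho_dx_neg:
  "x \<in> {t0 - \<delta><..<t0 + \<delta>} \<Longrightarrow> y \<in> {t0 - \<delta><..<t0 + \<delta>} \<Longrightarrow> x < y \<Longrightarrow> rho_dx x y < 0"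
  using tangent_coord_strict_mono[of x x y] by (simp add: rho_dx_eq_tangent_coord)

lemma rho_dx_nonzero:
  "x \<in> {t0 - \<delta><..<t0 + \<delta>} \<Longrightarrow> y \<in> {t0 - \<delta><..<t0 + \<delta>} \<Longrightarrow> x \<noteq> y \<Longrightarrow> rho_dx x y \<noteq> 0"
  using rho_dx_pos rho_dx_neg by (metis less_irrefl linorder_neqE_linordered_idom)

text \<open>Two reference points to the left of the window \<open>{t0<..<t0 + \<delta>}\<close>, where the
  cross identity is applied with \<open>x' = d0\<close> and \<open>y' = c0\<close>.\<close>

definition "c0 = t0 - \<delta> / 2"
definition "d0 = t0 - 3 * \<delta> / 4"

lemma c0_d0: "c0 \<in> {t0 - \<delta><..<t0 + \<delta>}" "d0 \<in> {t0 - \<delta><..<t0 + \<delta>}" "d0 < c0"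
  using \<delta>_pos by (auto simp: c0_def d0_def)

lemma window_in_chart: "x \<in> {t0<..<t0 + \<delta>} \<Longrightarrow> x \<in> {t0 - \<delta><..<t0 + \<delta>}"
  using \<delta>_pos by auto

lemma chart_in_unit: "x \<in> {t0 - \<delta><..<t0 + \<delta>} \<Longrightarrow> x \<in> {0<..<1}"
  using chart_sub by blast

lemma window_gt: "x \<in> {t0<..<t0 + \<delta>} \<Longrightarrow> c0 < x \<and> d0 < x"
  using \<delta>_pos by (auto simp: c0_def d0_def)

definition A :: "real \<Rightarrow> real" where
  "A x = - rho_dx x c0 / rho_dx c0 x"

definition B :: "real \<Rightarrow> real" where
  "B y = rho_dx d0 y * rho_dx c0 d0 / (rho_dx y d0 * rho_dx d0 c0)"

lemma A_pos: "x \<in> {t0<..<t0 + \<delta>} \<Longrightarrow> 0 < A x"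
  using rho_dx_pos[OF window_in_chart c0_d0(1)] rho_dx_neg[OF c0_d0(1) window_in_chart] window_gt
  by (simp add: A_def divide_pos_neg)

lemma A_real_analytic_at:
  assumes x: "x \<in> {t0<..<t0 + \<delta>}"
  shows "real_analytic_at A x"
proof -
  have "rho_dx c0 x \<noteq> 0"
    using rho_dx_neg[OF c0_d0(1) window_in_chart[OF x]] window_gt[OF x] by simp
  then show ?thesis
    unfolding A_def[abs_def] using chart_in_unit[OF window_in_chart[OF x]] chart_in_unit[OF c0_d0(1)]
    by (intro real_analytic_intros rho_dx_real_analytic_at)
qed

lemma rho_dx_ratio_split:
  assumes x: "x \<in> {t0<..<t0 + \<delta>}" and y: "y \<in> {t0<..<t0 + \<delta>}" and "x \<noteq> y"
  shows "rho_dx x y / rho_dx y x = - A x * B y"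
proof -
  have "rho_dx y x * rho_dx x c0 * rho_dx d0 y * rho_dx c0 d0
      = rho_dx x y * rho_dx c0 x * rho_dx y d0 * rho_dx d0 c0"
    by (rule cross_identity) (use chart_in_unit window_in_chart[OF x] window_in_chart[OF y] c0_d0 in auto)
  moreover have "rho_dx y x \<noteq> 0" "rho_dx c0 x \<noteq> 0" "rho_dx y d0 \<noteq> 0" "rho_dx d0 c0 \<noteq> 0"
    using rho_dx_nonzero window_in_chart[OF x] window_in_chart[OF y] c0_d0 window_gt[OF x]
      window_gt[OF y] \<open>x \<noteq> y\<close> by (metis less_irrefl)+
  ultimately show ?thesis
    unfolding A_def B_def by (simp add: field_simps)
qed

lemma A_mult_B: "y \<in> {t0<..<t0 + \<delta>} \<Longrightarrow> A y * B y = 1"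
proof -
  assume y: "y \<in> {t0<..<t0 + \<delta>}"
  have "((\<lambda>x. - A x * B y) \<longlongrightarrow> - A y * B y) (at y)"
    using real_analytic_at_isCont[OF A_real_analytic_at[OF y]] unfolding isCont_def
    by (intro tendsto_intros)
  moreover have "\<forall>\<^sub>F x in at y. - A x * B y = rho_dx x y / rho_dx y x"
    using eventually_at_in_open[of "{t0<..<t0 + \<delta>}" y] y
    by (auto elim!: eventually_mono simp: rho_dx_ratio_split)
  ultimately have "((\<lambda>x. rho_dx x y / rho_dx y x) \<longlongrightarrow> - A y * B y) (at y)"
    by (rule Lim_transform_eventually)
  then have "- A y * B y = -1"
    using tendsto_unique[OF trivial_limit_at _ rho_dx_ratio_tendsto] chart_in_unit window_in_chart[OF y]
    by blast
  then show ?thesis by simp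
qed

lemma rho_transport:
  assumes x: "x \<in> {t0<..<t0 + \<delta>}" and y: "y \<in> {t0<..<t0 + \<delta>}"
  shows "rho_dx x y / A x + rho_dx y x / A y = 0"
proof (cases "x = y")
  case False
  have "rho_dx x y = - A x * B y * rho_dx y x"
    using rho_dx_ratio_split[OF x y False] rho_dx_nonzero window_in_chart[OF x] window_in_chart[OF y] False
    by (simp add: field_simps)
  then show ?thesis
    using A_mult_B[OF y] A_pos[OF x] A_pos[OF y] by (simp add: field_simps)
qed simp

definition "p0 = t0 + \<delta> / 4"
definition "q0 = t0 + 3 * \<delta> / 4"

lemma p0_less_q0: "p0 < q0"
  using \<delta>_pos by (simp add: p0_def q0_def)

lemma in_window: "x \<in> {p0..q0} \<Longrightarrow> x \<in> {t0<..<t0 + \<delta>}"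
  using \<delta>_pos by (auto simp: p0_def q0_def)

definition \<phi> :: "real \<Rightarrow> real" where
  "\<phi> x = integral {p0..x} A"

lemma \<phi>_has_derivative_within: "x \<in> {p0..q0} \<Longrightarrow> (\<phi> has_real_derivative A x) (at x within {p0..q0})"
  unfolding \<phi>_def[abs_def]
  by (intro integral_has_real_derivative continuous_at_imp_continuous_on ballI
      real_analytic_at_isCont A_real_analytic_at in_window)

lemma \<phi>_continuous_on: "continuous_on {p0..q0} \<phi>"
  by (rule DERIV_continuous_on[OF \<phi>_has_derivative_within])

lemma \<phi>_has_derivative: "p0 < x \<Longrightarrow> x < q0 \<Longrightarrow> (\<phi> has_real_derivative A x) (at x)"
  using \<phi>_has_derivative_within[of x] at_within_Icc_at[of p0 x q0] by simp

lemma \<phi>_strict_mono: "strict_mono_on {p0..q0} \<phi>"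
proof (rule strict_mono_onI)
  fix s t assume st: "s \<in> {p0..q0}" "t \<in> {p0..q0}" "s < t"
  show "\<phi> s < \<phi> t"
  proof (rule DERIV_pos_imp_increasing_open[OF \<open>s < t\<close>])
    fix x assume "s < x" "x < t"
    then have "p0 < x" "x < q0" "x \<in> {p0..q0}" using st by auto
    then show "\<exists>y. (\<phi> has_real_derivative y) (at x) \<and> 0 < y"
      using \<phi>_has_derivative A_pos[OF in_window] by blast
  next
    show "continuous_on {s..t} \<phi>"
      by (rule continuous_on_subset[OF \<phi>_continuous_on]) (use st in auto)
  qed
qed

lemma \<phi>_image: "\<phi> ` {p0..q0} = {\<phi> p0..\<phi> q0}"
proof
  show "\<phi> ` {p0..q0} \<subseteq> {\<phi> p0..\<phi> q0}"
    using strict_mono_on_leD[OF \<phi>_strict_mono] p0_less_q0 by auto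
  show "{\<phi> p0..\<phi> q0} \<subseteq> \<phi> ` {p0..q0}"
  proof
    fix w assume "w \<in> {\<phi> p0..\<phi> q0}"
    then obtain x where "p0 \<le> x" "x \<le> q0" "\<phi> x = w"
      using IVT'[of \<phi> p0 w q0] \<phi>_continuous_on p0_less_q0 by auto
    then show "w \<in> \<phi> ` {p0..q0}" by auto
  qed
qed

definition \<psi> :: "real \<Rightarrow> real" where
  "\<psi> = inv_into {p0..q0} \<phi>"

lemma \<psi>_in: "w \<in> {\<phi> p0..\<phi> q0} \<Longrightarrow> \<psi> w \<in> {p0..q0}"
  unfolding \<psi>_def using inv_into_into \<phi>_image by metis

lemma \<phi>_\<psi>: "w \<in> {\<phi> p0..\<phi> q0} \<Longrightarrow> \<phi> (\<psi> w) = w"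
  unfolding \<psi>_def using f_inv_into_f \<phi>_image by metis

lemma \<psi>_\<phi>: "x \<in> {p0..q0} \<Longrightarrow> \<psi> (\<phi> x) = x"
  unfolding \<psi>_def using inv_into_f_f strict_mono_on_imp_inj_on[OF \<phi>_strict_mono] by metis

lemma \<psi>_inner:
  assumes "\<phi> p0 < w" "w < \<phi> q0"
  shows "p0 < \<psi> w \<and> \<psi> w < q0"
proof -
  have "\<psi> w \<in> {p0..q0}" "\<phi> (\<psi> w) = w"
    using \<psi>_in \<phi>_\<psi> assms by auto
  moreover have "\<psi> w \<noteq> p0" "\<psi> w \<noteq> q0"
    using calculation(2) assms by auto
  ultimately show ?thesis by auto
qed

lemma \<psi>_strict_mono:
  assumes "\<phi> p0 \<le> w1" "w1 < w2" "w2 \<le> \<phi> q0"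
  shows "\<psi> w1 < \<psi> w2"
proof (rule ccontr)
  assume "\<not> \<psi> w1 < \<psi> w2"
  moreover have "\<psi> w1 \<in> {p0..q0}" "\<psi> w2 \<in> {p0..q0}" using \<psi>_in assms by auto
  ultimately have "\<phi> (\<psi> w2) \<le> \<phi> (\<psi> w1)"
    using strict_mono_on_leD[OF \<phi>_strict_mono] by simp
  then show False using \<phi>_\<psi>[of w1] \<phi>_\<psi>[of w2] assms by auto
qed

lemma \<psi>_isCont: "\<phi> p0 < w \<Longrightarrow> w < \<phi> q0 \<Longrightarrow> isCont \<psi> w"
proof -
  assume w: "\<phi> p0 < w" "w < \<phi> q0"
  have "continuous_on {\<phi> p0..\<phi> q0} \<psi>"
    using continuous_on_inv[OF \<phi>_continuous_on compact_Icc] \<psi>_\<phi> \<phi>_image by auto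
  then show "isCont \<psi> w"
    by (rule continuous_on_interior) (use w in simp)
qed

lemma \<psi>_has_derivative:
  assumes "\<phi> p0 < w" "w < \<phi> q0"
  shows "(\<psi> has_real_derivative inverse (A (\<psi> w))) (at w)"
proof (rule DERIV_inverse_function[OF _ _ assms])
  show "(\<phi> has_real_derivative A (\<psi> w)) (at (\<psi> w))"
    using \<phi>_has_derivative \<psi>_inner[OF assms] by blast
  have "\<psi> w \<in> {p0..q0}"
    using \<psi>_inner[OF assms] by auto
  then show "A (\<psi> w) \<noteq> 0"
    using A_pos[OF in_window] by (metis less_irrefl)
  show "\<phi> (\<psi> y) = y" if "\<phi> p0 < y" "y < \<phi> q0" for y
    using \<phi>_\<psi> that by auto
  show "isCont \<psi> w"
    by (rule \<psi>_isCont[OF assms])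
qed

lemma \<phi>_real_analytic_at:
  assumes "p0 < x" "x < q0"
  shows "real_analytic_at \<phi> x"
proof (rule real_analytic_at_primitive[OF assms \<phi>_has_derivative])
  show "real_analytic_at A x"
    by (rule A_real_analytic_at[OF in_window]) (use assms in auto)
qed

lemma \<psi>_real_analytic_at:
  assumes w: "\<phi> p0 < w" "w < \<phi> q0"
  shows "real_analytic_at \<psi> w"
proof -
  define x where "x = \<psi> w"
  define e where "e = min (w - \<phi> p0) (\<phi> q0 - w)"
  have x: "p0 < x" "x < q0"
    using \<psi>_inner[OF w] by (auto simp: x_def)
  have \<phi>_x: "\<phi> x = w"
    unfolding x_def by (rule \<phi>_\<psi>) (use w in auto)
  have "deriv \<phi> x = A x"
    by (rule DERIV_imp_deriv[OF \<phi>_has_derivative[OF x]])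
  moreover have "0 < A x"
    by (rule A_pos[OF in_window]) (use x in auto)
  ultimately have "deriv \<phi> x \<noteq> 0" by simp
  moreover have "e > 0"
    using w by (simp add: e_def)
  moreover have "\<phi> (\<psi> w') = w'" if "\<bar>w' - \<phi> x\<bar> < e" for w'
  proof (rule \<phi>_\<psi>)
    have "\<bar>w' - w\<bar> < w - \<phi> p0" "\<bar>w' - w\<bar> < \<phi> q0 - w"
      using that \<phi>_x by (simp_all add: e_def)
    then show "w' \<in> {\<phi> p0..\<phi> q0}"
      by (simp add: abs_less_iff)
  qed
  moreover have "isCont \<psi> (\<phi> x)"
    using \<psi>_isCont[OF w] \<phi>_x by simp
  moreover have "\<psi> (\<phi> x) = x"
    by (rule \<psi>_\<phi>) (use x in auto)
  ultimately have "real_analytic_at \<psi> (\<phi> x)"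
    by (rule real_analytic_at_inverse[OF \<phi>_real_analytic_at[OF x]])
  then show ?thesis
    using \<phi>_x by simp
qed

definition "m0 = (p0 + q0) / 2"
definition "v0 = \<phi> m0"
definition "\<epsilon> = min (v0 - \<phi> p0) (\<phi> q0 - v0) / 2"
definition "a1 = \<psi> (v0 - \<epsilon>)"
definition "b1 = \<psi> (v0 + \<epsilon>)"
definition h :: "real \<Rightarrow> real" where
  "h w = rho D \<alpha> (\<psi> (w + v0)) m0"

lemma m0_bounds: "p0 < m0" "m0 < q0"
  using p0_less_q0 by (auto simp: m0_def)

lemma v0_bounds: "\<phi> p0 < v0" "v0 < \<phi> q0"
  using strict_mono_onD[OF \<phi>_strict_mono] m0_bounds by (auto simp: v0_def)

lemma \<epsilon>_bounds: "\<epsilon> > 0" "\<phi> p0 \<le> v0 - 2 * \<epsilon>" "v0 + 2 * \<epsilon> \<le> \<phi> q0"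
  using v0_bounds by (auto simp: \<epsilon>_def)

lemma \<psi>_v0: "\<psi> v0 = m0"
  unfolding v0_def by (rule \<psi>_\<phi>) (use m0_bounds in auto)

lemma a1_b1: "p0 < a1" "a1 < b1" "b1 < q0" "\<phi> a1 = v0 - \<epsilon>" "\<phi> b1 = v0 + \<epsilon>"
proof -
  have ends: "\<phi> p0 < v0 - \<epsilon>" "v0 - \<epsilon> < \<phi> q0" "\<phi> p0 < v0 + \<epsilon>" "v0 + \<epsilon> < \<phi> q0"
    using \<epsilon>_bounds by linarith+
  show "p0 < a1" "b1 < q0"
    using \<psi>_inner[OF ends(1,2)] \<psi>_inner[OF ends(3,4)] by (simp_all add: a1_def b1_def)
  show "a1 < b1"
    unfolding a1_def b1_def by (rule \<psi>_strict_mono) (use ends \<epsilon>_bounds in auto)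
  show "\<phi> a1 = v0 - \<epsilon>" "\<phi> b1 = v0 + \<epsilon>"
    unfolding a1_def b1_def by (rule \<phi>_\<psi>, use ends in auto)+
qed

lemma \<phi>_range: "x \<in> {a1<..<b1} \<Longrightarrow> v0 - \<epsilon> < \<phi> x \<and> \<phi> x < v0 + \<epsilon>"
  using strict_mono_onD[OF \<phi>_strict_mono, of a1 x] strict_mono_onD[OF \<phi>_strict_mono, of x b1] a1_b1
  by auto

lemma rho_eq_h:
  assumes x: "x \<in> {a1<..<b1}" and y: "y \<in> {a1<..<b1}"
  shows "rho D \<alpha> x y = h (\<phi> x - \<phi> y)"
proof -
  define J where "J = {\<phi> p0 - \<phi> x<..<\<phi> q0 - \<phi> x} \<inter> {\<phi> p0 - \<phi> y<..<\<phi> q0 - \<phi> y}"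
  define g where "g t = rho D \<alpha> (\<psi> (\<phi> x + t)) (\<psi> (\<phi> y + t))" for t
  have "(g has_derivative (\<lambda>h. 0)) (at t within J)" if t: "t \<in> J" for t
  proof -
    have wx: "\<phi> p0 < \<phi> x + t" "\<phi> x + t < \<phi> q0" and wy: "\<phi> p0 < \<phi> y + t" "\<phi> y + t < \<phi> q0"
      using t by (auto simp: J_def)
    have dX: "((\<lambda>t. \<psi> (\<phi> x + t)) has_real_derivative inverse (A (\<psi> (\<phi> x + t)))) (at t)"
      using DERIV_chain2[OF \<psi>_has_derivative[OF wx] DERIV_add[OF DERIV_const DERIV_ident]] by simp
    have dY: "((\<lambda>t. \<psi> (\<phi> y + t)) has_real_derivative inverse (A (\<psi> (\<phi> y + t)))) (at t)"
      using DERIV_chain2[OF \<psi>_has_derivative[OF wy] DERIV_add[OF DERIV_const DERIV_ident]] by simp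
    have X: "\<psi> (\<phi> x + t) \<in> {t0<..<t0 + \<delta>}" and Y: "\<psi> (\<phi> y + t) \<in> {t0<..<t0 + \<delta>}"
      using \<psi>_inner[OF wx] \<psi>_inner[OF wy] in_window by auto
    have "(g has_real_derivative 0) (at t)"
      using rho_has_real_derivative[OF dX dY chart_in_unit[OF window_in_chart[OF X]]
          chart_in_unit[OF window_in_chart[OF Y]]] rho_transport[OF X Y]
      unfolding g_def by (simp add: divide_inverse)
    then show ?thesis
      by (simp add: has_field_derivative_def lambda_zero has_derivative_at_withinI)
  qed
  moreover have "0 \<in> J" "v0 - \<phi> y \<in> J"
    using \<phi>_range[OF x] \<phi>_range[OF y] \<epsilon>_bounds v0_bounds by (auto simp: J_def)
  ultimately have "g 0 = g (v0 - \<phi> y)"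
    by (intro has_derivative_zero_unique[of J g]) (auto simp: J_def)
  moreover have "g 0 = rho D \<alpha> x y"
    unfolding g_def using \<psi>_\<phi>[of x] \<psi>_\<phi>[of y] x y a1_b1 by simp
  moreover have "g (v0 - \<phi> y) = h (\<phi> x - \<phi> y)"
    unfolding g_def h_def by (simp add: \<psi>_v0 algebra_simps)
  ultimately show ?thesis by simp
qed

lemma h_real_analytic_at:
  assumes "\<phi> p0 < w + v0" "w + v0 < \<phi> q0"
  shows "real_analytic_at h w"
proof -
  have shift: "real_analytic_at (\<lambda>w. \<psi> (w + v0)) w"
    using real_analytic_at_compose[OF \<psi>_real_analytic_at[OF assms]
        real_analytic_at_add[OF real_analytic_at_ident real_analytic_at_const]] .
  have "\<psi> (w + v0) \<in> {0<..<1}"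
    using \<psi>_inner[OF assms] chart_in_unit[OF window_in_chart[OF in_window]] by auto
  then have "real_analytic_at (\<lambda>w. \<alpha> (\<psi> (w + v0)) i) w" if "i < D" for i
    using real_analytic_at_compose[OF coord_real_analytic_at[OF that] shift] by simp
  then show ?thesis
    unfolding h_def[abs_def] rho_def power2_eq_square by (intro real_analytic_intros) auto
qed

lemma h_strict_mono:
  assumes u: "0 < u1" "u1 < u2" "u2 + v0 < \<phi> q0"
  shows "h u1 < h u2"
proof -
  define X1 where "X1 = \<psi> (u1 + v0)"
  define X2 where "X2 = \<psi> (u2 + v0)"
  have "m0 < X1" "X1 < X2" "X2 < q0"
    using \<psi>_strict_mono[of v0 "u1 + v0"] \<psi>_strict_mono[of "u1 + v0" "u2 + v0"] \<psi>_inner[of "u2 + v0"]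
      u v0_bounds by (auto simp: X1_def X2_def \<psi>_v0)
  have "rho D \<alpha> X1 m0 < rho D \<alpha> X2 m0"
  proof (rule DERIV_pos_imp_increasing[OF \<open>X1 < X2\<close>])
    fix s assume "X1 \<le> s" "s \<le> X2"
    then have s: "s \<in> {t0<..<t0 + \<delta>}" "m0 < s"
      using \<open>m0 < X1\<close> \<open>X2 < q0\<close> m0_bounds in_window[of s] by auto
    have m0_window: "m0 \<in> {t0<..<t0 + \<delta>}"
      using m0_bounds in_window[of m0] by simp
    have "((\<lambda>s. rho D \<alpha> s m0) has_real_derivative rho_dx s m0 * 1 + rho_dx m0 s * 0) (at s)"
      by (rule rho_has_real_derivative)
         (use chart_in_unit window_in_chart s m0_window in \<open>auto intro!: derivative_eq_intros\<close>)
    moreover have "0 < rho_dx s m0"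
      using rho_dx_pos window_in_chart s m0_window by blast
    ultimately show "\<exists>d. ((\<lambda>s. rho D \<alpha> s m0) has_real_derivative d) (at s) \<and> 0 < d"
      by auto
  qed
  then show ?thesis by (simp add: h_def X1_def X2_def)
qed

lemma rho_chart_form:
  "\<exists>a b \<phi> h. 0 \<le> a \<and> a < b \<and> b \<le> 1 \<and>
     real_analytic_on {a<..<b} \<phi> \<and> inj_on \<phi> {a<..<b} \<and>
     real_analytic_on {\<phi> x - \<phi> y | x y. x \<in> {a<..<b} \<and> y \<in> {a<..<b}} h \<and>
     inj_on h {u \<in> {\<phi> x - \<phi> y | x y. x \<in> {a<..<b} \<and> y \<in> {a<..<b}}. 0 < u} \<and>
     (\<forall>x\<in>{a<..<b}. \<forall>y\<in>{a<..<b}. rho D \<alpha> x y = h (\<phi> x - \<phi> y))"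
proof (intro exI conjI)
  define S where "S = {\<phi> x - \<phi> y | x y. x \<in> {a1<..<b1} \<and> y \<in> {a1<..<b1}}"
  have S: "\<phi> p0 < w + v0 \<and> w + v0 < \<phi> q0" if w: "w \<in> S" for w
  proof -
    obtain x y where "w = \<phi> x - \<phi> y" "x \<in> {a1<..<b1}" "y \<in> {a1<..<b1}"
      using w unfolding S_def by blast
    then show ?thesis using \<phi>_range[of x] \<phi>_range[of y] \<epsilon>_bounds by auto
  qed
  have "p0 \<in> {0<..<1}" "q0 \<in> {0<..<1}"
    using chart_in_unit[OF window_in_chart[OF in_window]] p0_less_q0 by auto
  then show "0 \<le> a1" "b1 \<le> 1"
    using a1_b1 by auto
  show "a1 < b1" by (rule a1_b1)
  show "real_analytic_on {a1<..<b1} \<phi>"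
    unfolding real_analytic_on_iff_real_analytic_at using \<phi>_real_analytic_at a1_b1 by auto
  show "inj_on \<phi> {a1<..<b1}"
    by (rule inj_on_subset[OF strict_mono_on_imp_inj_on[OF \<phi>_strict_mono]]) (use a1_b1 in auto)
  show "real_analytic_on S h"
    unfolding real_analytic_on_iff_real_analytic_at using S h_real_analytic_at by blast
  show "inj_on h {u \<in> S. 0 < u}"
  proof (rule linorder_inj_onI')
    fix u1 u2 assume "u1 \<in> {u \<in> S. 0 < u}" "u2 \<in> {u \<in> S. 0 < u}" "u1 < u2"
    then show "h u1 \<noteq> h u2"
      using S[of u2] h_strict_mono[of u1 u2] by simp
  qed
  show "\<forall>x\<in>{a1<..<b1}. \<forall>y\<in>{a1<..<b1}. rho D \<alpha> x y = h (\<phi> x - \<phi> y)"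
    using rho_eq_h by blast
qed

end

theorem lemma2p5:
  fixes D :: nat and \<gamma> :: "(nat \<Rightarrow> real) set" and \<alpha> :: "real \<Rightarrow> nat \<Rightarrow> real"
  assumes "D \<ge> 1"
    and "real_alg_curve D \<gamma>"
    and "\<forall>t\<in>{0<..<1}. \<alpha> t \<in> \<gamma>"
    and "\<forall>t\<in>{0<..<1}. \<alpha> t 0 = t"
    and "\<forall>i<D. real_analytic_on {0<..<1} (\<lambda>t. \<alpha> t i)"
    and "openin (top_of_set \<gamma>) (\<alpha> ` {0<..<1})"
    and "\<forall>p. (\<forall>k. p$k \<in> {0<..<1}) \<longrightarrow> det (jacobian (Tmap D \<alpha>) (at p)) = 0"
  shows "\<exists>a b \<phi> h. 0 \<le> a \<and> a < b \<and> b \<le> 1 \<and>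
     real_analytic_on {a<..<b} \<phi> \<and> inj_on \<phi> {a<..<b} \<and>
     real_analytic_on {\<phi> x - \<phi> y | x y. x \<in> {a<..<b} \<and> y \<in> {a<..<b}} h \<and>
     inj_on h {u \<in> {\<phi> x - \<phi> y | x y. x \<in> {a<..<b} \<and> y \<in> {a<..<b}}. 0 < u} \<and>
     (\<forall>x\<in>{a<..<b}. \<forall>y\<in>{a<..<b}. rho D \<alpha> x y = h (\<phi> x - \<phi> y))"
proof -
  interpret degenerate_arc D \<alpha>
    by unfold_locales (use assms(1,4,5,7) in auto)
  obtain \<delta> where "\<delta> > 0" "{1/2 - \<delta><..<1/2 + \<delta>} \<subseteq> {0<..<1}"
    and "\<And>s t. s \<in> {1/2 - \<delta><..<1/2 + \<delta>} \<Longrightarrow> t \<in> {1/2 - \<delta><..<1/2 + \<delta>} \<Longrightarrow>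
      0 < (\<Sum>i<D. \<alpha>' i s * \<alpha>' i t)"
    using inner_deriv_pos_near[of "1/2"] by auto
  then interpret degenerate_arc_chart D \<alpha> "1/2" \<delta>
    by unfold_locales
  show ?thesis
    by (rule rho_chart_form)
qed

end
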